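(* Let $\mathbf{G}=(\mathcal{V},\mathcal{E})$ be a directed graph on $\mathcal{V}=\{1,\dots,m\}$ and let $\tau\ge 0$ be an integer. If the weak vertex-connectivity of $\mathbf{G}$ satisfies $\kappa(\bar{\mathbf{G}})\geq \tau+1$, then the TITAN algorithm (described in the context) is $\mathcal{A}$-private for every set $\mathcal{A}\subseteq\mathcal{V}$ of corrupted nodes with $|\mathcal{A}|\le\tau$.
   Context: $\bar{\mathbf{G}}$ is the undirected graph on $\mathcal{V}$ whose edges are the edges of $\mathcal{E}$ with orientation ignored (i.e. $\mathcal{E}$ together with all reversed edges); the weak vertex-connectivity of $\mathbf{G}$ is the vertex-connectivity $\kappa(\bar{\mathbf{G}})$. For $a'>0$ and real $y$, $\mathrm{mod}(y,a')=y-pa'$ with $p$ the unique integer such that $y-pa'\in[0,a')$. Each node $i$ holds a private input $x_i\in[0,a)$ for a fixed $a>0$. TITAN: each node $i$ draws, for each out-neighbor $j$, an independent $r_{ij}$ uniform on $[0,ma)$ and sends it to $j$; it computes $t_i=\mathrm{mod}\big(\sum_{j\in\mathcal{N}_i^{in}} r_{ji}-\sum_{j\in\mathcal{N}_i^{out}} r_{ij}, ma\big)$ and $\tilde{x}_i=\mathrm{mod}(x_i+t_i,ma)$; then all nodes run a deterministic protocol (repeated Top-$k$ max-type consensus on the pairs $(\tilde x_i,i)$) by which every node learns all of $\tilde{x}_1,\dots,\tilde{x}_m$, and output $\frac1m\mathrm{mod}(\sum_i\tilde x_i,ma)$. Adversary: honest-but-curious, corrupting a set $\mathcal{A}$ of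 nodes; it follows the protocol but observes everything stored, sent and received by corrupted nodes. Its view $\mathrm{View}_{\mathcal{A}}(x)$ consists of the inputs $\{x_i: i\in\mathcal{A}\}$, the perturbed inputs $\{\tilde{x}_i: i\notin\mathcal{A}\}$, and the random numbers $\{r_{ij}: i\in\mathcal{A}\text{ or } j\in\mathcal{A}\}$. The algorithm is $\mathcal{A}$-private if for all input vectors $x,x'\in[0,a)^m$ with $x_i=x'_i$ for all $i\in\mathcal{A}$ and $\sum_{i=1}^m x_i=\sum_{i=1}^m x'_i$, the random variables $\mathrm{View}_{\mathcal{A}}(x)$ and $\mathrm{View}_{\mathcal{A}}(x')$ have identical distributions. *)

theory Defs
  imports "HOL-Probability.Probability"
begin

definition rmod :: "real \<Rightarrow> real \<Rightarrow> real" where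
  "rmod y a' = y - of_int \<lfloor>y / a'\<rfloor> * a'"

definition und_connected_on :: "nat set \<Rightarrow> (nat \<times> nat) set \<Rightarrow> bool" where
  "und_connected_on U E \<longleftrightarrow>
     (\<forall>u\<in>U. \<forall>v\<in>U. (u, v) \<in> ({(x, y). x \<in> U \<and> y \<in> U \<and> ((x, y) \<in> E \<or> (y, x) \<in> E)})\<^sup>*)"

text \<open>Vertex connectivity kappa of the underlying undirected graph (weak vertex-connectivity
  of G): the minimum number of vertices whose removal leaves a disconnected graph or a graph
  with at most one vertex (so that the complete graph on m vertices has kappa = m - 1).\<close>
definition weak_vertex_connectivity :: "nat set \<Rightarrow> (nat \<times> nat) set \<Rightarrow> nat" where
  "weak_vertex_connectivity V E =
     Min {card S | S. S \<subseteq> V \<and> (card (V - S) \<le> 1 \<or> \<not> und_connected_on (V - S) E)}"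

definition titan_rand_space :: "nat \<Rightarrow> real \<Rightarrow> (nat \<times> nat) set \<Rightarrow> ((nat \<times> nat) \<Rightarrow> real) measure" where
  "titan_rand_space m a E = PiM E (\<lambda>_. uniform_measure lborel {0..<real m * a})"

definition titan_t :: "nat \<Rightarrow> real \<Rightarrow> (nat \<times> nat) set \<Rightarrow> ((nat \<times> nat) \<Rightarrow> real) \<Rightarrow> nat \<Rightarrow> real" where
  "titan_t m a E r i =
     rmod ((\<Sum>j\<in>{j. (j, i) \<in> E}. r (j, i)) - (\<Sum>j\<in>{j. (i, j) \<in> E}. r (i, j))) (real m * a)"

definition titan_perturbed :: "nat \<Rightarrow> real \<Rightarrow> (nat \<times> nat) set \<Rightarrow> (nat \<Rightarrow> real) \<Rightarrow> ((nat \<times> nat) \<Rightarrow> real) \<Rightarrow> nat \<Rightarrow> real" where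
  "titan_perturbed m a E x r i = rmod (x i + titan_t m a E r i) (real m * a)"

text \<open>Edges whose random number is seen by the adversary.\<close>
definition adv_edges :: "(nat \<times> nat) set \<Rightarrow> nat set \<Rightarrow> (nat \<times> nat) set" where
  "adv_edges E A = {(i, j) \<in> E. i \<in> A \<or> j \<in> A}"

definition titan_view ::
  "nat \<Rightarrow> real \<Rightarrow> (nat \<times> nat) set \<Rightarrow> nat set \<Rightarrow> (nat \<Rightarrow> real) \<Rightarrow> ((nat \<times> nat) \<Rightarrow> real)
    \<Rightarrow> (nat \<Rightarrow> real) \<times> (nat \<Rightarrow> real) \<times> ((nat \<times> nat) \<Rightarrow> real)" where
  "titan_view m a E A x r =
     (restrict x A,
      restrict (titan_perturbed m a E x r) ({1..m} - A),
      restrict r (adv_edges E A))"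

definition view_space :: "nat \<Rightarrow> (nat \<times> nat) set \<Rightarrow> nat set
    \<Rightarrow> ((nat \<Rightarrow> real) \<times> (nat \<Rightarrow> real) \<times> ((nat \<times> nat) \<Rightarrow> real)) measure" where
  "view_space m E A =
     PiM A (\<lambda>_. borel) \<Otimes>\<^sub>M (PiM ({1..m} - A) (\<lambda>_. borel) \<Otimes>\<^sub>M PiM (adv_edges E A) (\<lambda>_. borel))"

definition titan_private :: "nat \<Rightarrow> real \<Rightarrow> (nat \<times> nat) set \<Rightarrow> nat set \<Rightarrow> bool" where
  "titan_private m a E A \<longleftrightarrow>
     (\<forall>x x'. (\<forall>i\<in>{1..m}. x i \<in> {0..<a}) \<and> (\<forall>i\<in>{1..m}. x' i \<in> {0..<a})
        \<and> (\<forall>i\<in>A. x i = x' i) \<and> (\<Sum>i=1..m. x i) = (\<Sum>i=1..m. x' i)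
        \<longrightarrow> distr (titan_rand_space m a E) (view_space m E A) (titan_view m a E A x)
          = distr (titan_rand_space m a E) (view_space m E A) (titan_view m a E A x'))"

end

theory Submission
  imports Defs
begin

text \<open>Adding \<open>d\<close> modulo \<open>m a\<close> to the random number on an edge between two honest nodes
  preserves the distribution of the randomness, since the uniform distribution on \<open>[0, m a)\<close>
  is invariant under rotations. It changes the perturbed inputs of the two endpoints by \<open>-d\<close>
  and \<open>+d\<close> modulo \<open>m a\<close> and leaves everything else the adversary sees unchanged, so the view
  distribution for the input \<open>x\<close> equals that for \<open>x\<close> with mass \<open>d\<close> moved along the edge.
  Fewer than \<open>\<kappa>\<close> corrupted nodes leave the honest nodes connected, so mass can be moved
  between any two honest nodes, and two inputs that agree on the corrupted nodes and have the
  same total differ by finitely many such moves.\<close>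

lemma rmod_add_int_mult: "L \<noteq> 0 \<Longrightarrow> rmod (y + of_int k * L) L = rmod y L"
  unfolding rmod_def by (simp add: add_divide_distrib algebra_simps)

lemma rmod_eq_add_int_mult: "\<exists>k::int. rmod y L = y + of_int k * L"
  unfolding rmod_def by (rule exI[of _ "- \<lfloor>y / L\<rfloor>"]) simp

lemma rmod_add_rmod: "L \<noteq> 0 \<Longrightarrow> rmod (z + rmod y L) L = rmod (z + y) L"
  by (metis add.assoc rmod_add_int_mult rmod_eq_add_int_mult)

lemma rmod_eq_self: "0 \<le> y \<Longrightarrow> y < L \<Longrightarrow> rmod y L = y"
  unfolding rmod_def by (simp add: floor_eq_iff)

lemma rmod_eq_diff: "L \<le> y \<Longrightarrow> y < 2 * L \<Longrightarrow> rmod y L = y - L"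
  unfolding rmod_def by (simp add: floor_eq_iff field_simps)

lemma rmod_bounds: "L > 0 \<Longrightarrow> 0 \<le> rmod y L \<and> rmod y L < L"
  unfolding rmod_def
  using floor_divide_lower[of L y] floor_divide_upper[of L y] by (simp add: algebra_simps)

lemma borel_measurable_rmod [measurable]:
  "f \<in> borel_measurable M \<Longrightarrow> (\<lambda>x. rmod (f x) L) \<in> borel_measurable M"
proof -
  assume f: "f \<in> borel_measurable M"
  then have "(\<lambda>x. real_of_int \<lfloor>f x / L\<rfloor>) \<in> borel_measurable M"
    using measurable_compose[OF _ borel_measurable_real_floor] by measurable
  with f show ?thesis unfolding rmod_def by measurable
qed

lemma emeasure_lborel_vimage_plus:
  "S \<in> sets borel \<Longrightarrow> emeasure lborel ((+) (c::real) -` S) = emeasure lborel S"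
  by (subst (2) lborel_distr_plus[symmetric, of c]) (simp add: emeasure_distr)

lemma vimage_rotation:
  assumes "0 \<le> c" "c < L"
  shows "{0..<L} \<inter> (\<lambda>y. rmod (y + c) L) -` B
    = (+) c -` (B \<inter> {c..<L}) \<union> (+) (c - L) -` (B \<inter> {0..<c})"
proof -
  have "rmod (y + c) L = (if y + c < L then c + y else c - L + y)" if "0 \<le> y" "y < L" for y
    using that assms by (simp add: rmod_eq_self rmod_eq_diff)
  then show ?thesis using assms by (auto split: if_splits)
qed

lemma emeasure_lborel_rotation:
  assumes "0 \<le> c" "c < L" "B \<in> sets borel"
  shows "emeasure lborel ({0..<L} \<inter> (\<lambda>y. rmod (y + c) L) -` B) = emeasure lborel ({0..<L} \<inter> B)"
proof -
  have "emeasure lborel ({0..<L} \<inter> (\<lambda>y. rmod (y + c) L) -` B)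
      = emeasure lborel ((+) c -` (B \<inter> {c..<L})) + emeasure lborel ((+) (c - L) -` (B \<inter> {0..<c}))"
    unfolding vimage_rotation[OF assms(1,2)] using assms by (intro plus_emeasure[symmetric]) auto
  also have "\<dots> = emeasure lborel (B \<inter> {c..<L}) + emeasure lborel (B \<inter> {0..<c})"
    using assms by (intro arg_cong2[where f = "(+)"] emeasure_lborel_vimage_plus) auto
  also have "\<dots> = emeasure lborel (B \<inter> {c..<L} \<union> B \<inter> {0..<c})"
    using assms by (intro plus_emeasure) auto
  also have "B \<inter> {c..<L} \<union> B \<inter> {0..<c} = {0..<L} \<inter> B"
    using assms by auto
  finally show ?thesis .
qed

lemma distr_uniform_rotation:
  fixes L :: real
  assumes "L > 0"
  defines "U \<equiv> uniform_measure lborel {0..<L}"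
  shows "distr U U (\<lambda>y. rmod (y + c) L) = U"
proof (rule measure_eqI)
  fix B assume "B \<in> sets (distr U U (\<lambda>y. rmod (y + c) L))"
  then have B: "B \<in> sets borel" by (simp add: U_def)
  define c' where "c' = rmod c L"
  have c': "0 \<le> c'" "c' < L" using rmod_bounds[OF \<open>L > 0\<close>] by (simp_all add: c'_def)
  have rot: "(\<lambda>y. rmod (y + c) L) = (\<lambda>y. rmod (y + c') L)"
    using assms by (simp add: c'_def rmod_add_rmod)
  have meas: "(\<lambda>y. rmod (y + c') L) \<in> measurable U U"
    by (simp add: U_def measurable_cong_sets[OF sets_uniform_measure sets_uniform_measure])
  have "(\<lambda>y. rmod (y + c') L) -` B \<in> sets borel"
    using measurable_sets_borel[of "\<lambda>y. rmod (y + c') L" borel B] B by simp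
  moreover have "emeasure (distr U U (\<lambda>y. rmod (y + c') L)) B
      = emeasure U ((\<lambda>y. rmod (y + c') L) -` B \<inter> space U)"
    using B by (intro emeasure_distr[OF meas]) (simp add: U_def)
  ultimately show "emeasure (distr U U (\<lambda>y. rmod (y + c) L)) B = emeasure U B"
    unfolding rot using B c' by (simp add: U_def emeasure_lborel_rotation)
qed simp

lemma measurable_PiM_coordinatewise:
  "(\<And>i. i \<in> I \<Longrightarrow> f i \<in> measurable N N)
    \<Longrightarrow> (\<lambda>\<omega>. \<lambda>i\<in>I. f i (\<omega> i)) \<in> measurable (PiM I (\<lambda>_. N)) (PiM I (\<lambda>_. N))"
  by (rule measurable_restrict) (rule measurable_compose[OF measurable_component_singleton], auto)

lemma distr_PiM_coordinatewise:
  assumes I: "finite I" and N: "prob_space N"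
    and f: "\<And>i. i \<in> I \<Longrightarrow> f i \<in> measurable N N" "\<And>i. i \<in> I \<Longrightarrow> distr N N (f i) = N"
  shows "distr (PiM I (\<lambda>_. N)) (PiM I (\<lambda>_. N)) (\<lambda>\<omega>. \<lambda>i\<in>I. f i (\<omega> i)) = PiM I (\<lambda>_. N)"
proof -
  interpret product_prob_space "\<lambda>_. N" by (rule product_prob_spaceI) (rule N)
  note meas = measurable_PiM_coordinatewise[OF f(1)]
  show ?thesis
  proof (rule PiM_eqI[OF I])
    fix A assume A: "\<And>i. i \<in> I \<Longrightarrow> A i \<in> sets N"
    have "emeasure (distr (PiM I (\<lambda>_. N)) (PiM I (\<lambda>_. N)) (\<lambda>\<omega>. \<lambda>i\<in>I. f i (\<omega> i))) (PiE I A)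
        = emeasure (PiM I (\<lambda>_. N)) (PiE I (\<lambda>i. f i -` A i \<inter> space N))"
      using A by (subst emeasure_distr[OF meas sets_PiM_I_finite[OF I A]])
        (auto intro!: arg_cong[where f = "emeasure _"] simp: space_PiM PiE_def Pi_def extensional_def)
    also have "\<dots> = (\<Prod>i\<in>I. emeasure N (f i -` A i \<inter> space N))"
      using A f(1) by (intro emeasure_PiM[OF I]) auto
    also have "\<dots> = (\<Prod>i\<in>I. emeasure (distr N N (f i)) (A i))"
      using A f(1) by (intro prod.cong refl emeasure_distr[symmetric]) auto
    also have "\<dots> = (\<Prod>i\<in>I. emeasure N (A i))"
      using f(2) by simp
    finally show "emeasure (distr (PiM I (\<lambda>_. N)) (PiM I (\<lambda>_. N)) (\<lambda>\<omega>. \<lambda>i\<in>I. f i (\<omega> i))) (PiE I A)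
        = (\<Prod>i\<in>I. emeasure N (A i))" .
  qed simp
qed

definition move_mass :: "('a \<Rightarrow> 'b::ab_group_add) \<Rightarrow> 'a \<Rightarrow> 'a \<Rightarrow> 'b \<Rightarrow> 'a \<Rightarrow> 'b" where
  "move_mass x u w d = (\<lambda>i. x i - (if i = u then d else 0) + (if i = w then d else 0))"

lemma move_mass_self [simp]: "move_mass x u u d = x"
  by (simp add: move_mass_def)

lemma move_mass_move_mass: "move_mass (move_mass x u v d) v w d = move_mass x u w d"
  by (auto simp: move_mass_def)

lemma move_mass_swap: "move_mass x w u (- d) = move_mass x u w d"
  by (auto simp: move_mass_def)

lemma sum_move_mass: "finite S \<Longrightarrow> u \<in> S \<Longrightarrow> w \<in> S \<Longrightarrow> sum (move_mass x u w d) S = sum x S"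
  by (simp add: move_mass_def sum.distrib sum_subtractf sum.delta)

lemma move_mass_invariant_rtrancl:
  assumes "(u, w) \<in> R\<^sup>*"
    and step: "\<And>x u v d. (u, v) \<in> R \<Longrightarrow> F (move_mass x u v d) = F x"
  shows "F (move_mass x u w d) = F x"
  using assms(1)
proof (induction rule: rtrancl_induct)
  case (step v w)
  have "F (move_mass x u w d) = F (move_mass (move_mass x u v d) v w d)"
    by (simp add: move_mass_move_mass)
  also have "\<dots> = F x"
    using step.IH step.hyps(2) by (simp add: assms(2))
  finally show ?case .
qed simp

lemma move_mass_invariant_eq:
  fixes x x' :: "'a \<Rightarrow> 'b::ab_group_add"
  assumes "finite H" "H \<noteq> {}"
    and "\<And>x u w d. u \<in> H \<Longrightarrow> w \<in> H \<Longrightarrow> F (move_mass x u w d) = F x"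
    and "\<And>i. i \<notin> H \<Longrightarrow> x i = x' i" "sum x H = sum x' H"
  shows "F x = F x'"
  using assms
proof (induction H arbitrary: x rule: finite_ne_induct)
  case (singleton h)
  have "x = x'"
  proof
    show "x i = x' i" for i
      using singleton.prems(2)[of i] singleton.prems(3) by (cases "i = h") auto
  qed
  then show ?case by simp
next
  case (insert s H)
  obtain w where "w \<in> H" using insert.hyps(2) by blast
  define y where "y = move_mass x s w (x s - x' s)"
  have "F x = F y"
    using insert.prems(1) \<open>w \<in> H\<close> by (simp add: y_def)
  also have "F y = F x'"
  proof (rule insert.IH)
    show "F (move_mass z u v e) = F z" if "u \<in> H" "v \<in> H" for z u v e
      using insert.prems(1) that by blast
    show "y i = x' i" if "i \<notin> H" for i
      using that \<open>w \<in> H\<close> insert.prems(2)[of i] by (auto simp: y_def move_mass_def)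
    have "sum y (insert s H) = sum x' (insert s H)"
      using insert.hyps(1) insert.prems(3) \<open>w \<in> H\<close> by (simp add: y_def sum_move_mass)
    moreover have "y s = x' s"
      using insert.hyps(3) \<open>w \<in> H\<close> by (auto simp: y_def move_mass_def)
    ultimately show "sum y H = sum x' H"
      using insert.hyps(1,3) by simp
  qed
  finally show ?case .
qed

lemma und_connected_on_diff_if_card_less:
  assumes "finite V" "S \<subseteq> V" "card S < weak_vertex_connectivity V E"
  shows "und_connected_on (V - S) E" "2 \<le> card (V - S)"
proof -
  let ?K = "{card S | S. S \<subseteq> V \<and> (card (V - S) \<le> 1 \<or> \<not> und_connected_on (V - S) E)}"
  have "?K \<subseteq> card ` Pow V"
    by blast
  then have "finite ?K"
    using assms(1) by (simp add: finite_subset)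
  have "\<not> (card (V - S) \<le> 1 \<or> \<not> und_connected_on (V - S) E)"
  proof
    assume "card (V - S) \<le> 1 \<or> \<not> und_connected_on (V - S) E"
    then have "card S \<in> ?K" using assms(2) by blast
    then have "Min ?K \<le> card S" using \<open>finite ?K\<close> by (rule Min_le[rotated])
    with assms(3) show False unfolding weak_vertex_connectivity_def by simp
  qed
  then show "und_connected_on (V - S) E" "2 \<le> card (V - S)" by auto
qed

definition net_flow :: "(nat \<times> nat) set \<Rightarrow> ((nat \<times> nat) \<Rightarrow> real) \<Rightarrow> nat \<Rightarrow> real" where
  "net_flow E r i = (\<Sum>j\<in>{j. (j, i) \<in> E}. r (j, i)) - (\<Sum>j\<in>{j. (i, j) \<in> E}. r (i, j))"

lemma net_flow_cong: "(\<And>e. e \<in> E \<Longrightarrow> r e = r' e) \<Longrightarrow> net_flow E r i = net_flow E r' i"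
  unfolding net_flow_def by (intro arg_cong2[where f = "(-)"] sum.cong) auto

lemma net_flow_add_edge:
  assumes "finite E" "(u, v) \<in> E"
  shows "net_flow E (r((u, v) := r (u, v) + c)) = move_mass (net_flow E r) u v c"
proof
  fix i
  have fin: "finite {j. (j, i) \<in> E}" "finite {j. (i, j) \<in> E}"
    by (rule finite_subset[OF _ finite_imageI[OF assms(1)]], force)+
  have upd: "(r((u, v) := r (u, v) + c)) e = r e + (if e = (u, v) then c else 0)" for e
    by simp
  have "(\<Sum>j\<in>{j. (j, i) \<in> E}. if (j, i) = (u, v) then c else 0) = (if i = v then c else 0)"
    using fin(1) assms(2) by (cases "i = v") (simp_all add: sum.delta)
  moreover have "(\<Sum>j\<in>{j. (i, j) \<in> E}. if (i, j) = (u, v) then c else 0) = (if i = u then c else 0)"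
    using fin(2) assms(2) by (cases "i = u") (simp_all add: sum.delta)
  ultimately show "net_flow E (r((u, v) := r (u, v) + c)) i = move_mass (net_flow E r) u v c i"
    by (simp add: net_flow_def move_mass_def upd sum.distrib del: fun_upd_apply)
qed

lemma titan_perturbed_eq_rmod_net_flow:
  "real m * a \<noteq> 0 \<Longrightarrow> titan_perturbed m a E x r i = rmod (x i + net_flow E r i) (real m * a)"
  unfolding titan_perturbed_def titan_t_def net_flow_def by (rule rmod_add_rmod)

lemma titan_view_cong:
  "A \<subseteq> {1..m} \<Longrightarrow> (\<And>i. i \<in> {1..m} \<Longrightarrow> x i = x' i)
    \<Longrightarrow> titan_view m a E A x = titan_view m a E A x'"
  unfolding titan_view_def titan_perturbed_def by (intro ext) (auto intro!: restrict_ext)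

lemma measurable_titan_view:
  "titan_view m a E A x \<in> measurable (titan_rand_space m a E) (view_space m E A)"
proof -
  have component: "(\<lambda>r. r e) \<in> borel_measurable (titan_rand_space m a E)" if "e \<in> E" for e
    using measurable_component_singleton[OF that, of "\<lambda>_. uniform_measure lborel {0..<real m * a}"]
    by (simp add: titan_rand_space_def measurable_cong_sets[OF refl sets_uniform_measure])
  then have "(\<lambda>r. titan_perturbed m a E x r i) \<in> borel_measurable (titan_rand_space m a E)" for i
    unfolding titan_perturbed_def titan_t_def by measurable
  moreover have "restrict x A \<in> space (PiM A (\<lambda>_. borel))"
    by (simp add: space_PiM)
  ultimately show ?thesis
    unfolding titan_view_def view_space_def using component
    by (intro measurable_Pair measurable_const measurable_restrict) (auto simp: adv_edges_def)
qed

lemma titan_view_move_mass_rotate_edge: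
  assumes nonzero: "real m * a \<noteq> 0" and "finite E" "(u, v) \<in> E" "u \<notin> A" "v \<notin> A"
    and r': "\<And>e. e \<in> E \<Longrightarrow> r' e = (if e = (u, v) then rmod (r e + d) (real m * a) else r e)"
  shows "titan_view m a E A (move_mass x v u d) r' = titan_view m a E A x r"
proof -
  define l where "l = real m * a"
  obtain k :: int where k: "rmod (r (u, v) + d) l = r (u, v) + (d + of_int k * l)"
    using rmod_eq_add_int_mult by (metis add.assoc)
  have "net_flow E r' i = net_flow E (r((u, v) := r (u, v) + (d + of_int k * l))) i" for i
    using r' k by (intro net_flow_cong) (simp add: l_def)
  then have net: "net_flow E r' i = move_mass (net_flow E r) u v (d + of_int k * l) i" for i
    using net_flow_add_edge[OF assms(2,3)] by simp
  have "titan_perturbed m a E (move_mass x v u d) r' = titan_perturbed m a E x r"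
  proof
    fix i
    define c :: int where "c = (if i = v then k else 0) - (if i = u then k else 0)"
    have "titan_perturbed m a E (move_mass x v u d) r' i
        = rmod (move_mass x v u d i + net_flow E r' i) l"
      using nonzero by (simp add: titan_perturbed_eq_rmod_net_flow l_def)
    also have "move_mass x v u d i + net_flow E r' i = x i + net_flow E r i + of_int c * l"
      by (simp add: net move_mass_def c_def algebra_simps)
    also have "rmod \<dots> l = rmod (x i + net_flow E r i) l"
      using nonzero by (simp add: rmod_add_int_mult l_def)
    also have "\<dots> = titan_perturbed m a E x r i"
      using nonzero by (simp add: titan_perturbed_eq_rmod_net_flow l_def)
    finally show "titan_perturbed m a E (move_mass x v u d) r' i = titan_perturbed m a E x r i" .
  qed
  moreover have "restrict (move_mass x v u d) A = restrict x A"
    using assms(4,5) by (auto simp: move_mass_def)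
  moreover have "restrict r' (adv_edges E A) = restrict r (adv_edges E A)"
    using r' assms(4,5) by (auto simp: adv_edges_def)
  ultimately show ?thesis
    by (simp add: titan_view_def)
qed

lemma distr_titan_view_move_mass_edge:
  assumes "real m * a > 0" "finite E" "(u, v) \<in> E" "u \<notin> A" "v \<notin> A"
  shows "distr (titan_rand_space m a E) (view_space m E A) (titan_view m a E A (move_mass x v u d))
       = distr (titan_rand_space m a E) (view_space m E A) (titan_view m a E A x)"
proof -
  define P where "P = titan_rand_space m a E"
  define U where "U = uniform_measure lborel {0..<real m * a}"
  define f where "f e = (if e = (u, v) then (\<lambda>y. rmod (y + d) (real m * a)) else (\<lambda>y. y))" for e
  define rotate where "rotate r = (\<lambda>e\<in>E. f e (r e))" for r
  have P: "P = PiM E (\<lambda>_. U)"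
    by (simp add: P_def titan_rand_space_def U_def)
  have f_meas: "f e \<in> measurable U U" for e
    by (simp add: f_def U_def measurable_cong_sets[OF sets_uniform_measure sets_uniform_measure])
  have "distr U U (\<lambda>y. rmod (y + d) (real m * a)) = U"
    unfolding U_def by (rule distr_uniform_rotation[OF assms(1)])
  then have "distr U U (f e) = U" for e
    by (simp add: f_def)
  moreover have "prob_space U"
    unfolding U_def using assms(1) by (intro prob_space_uniform_measure) (auto simp: zero_less_mult_iff)
  ultimately have rotate_distr: "distr P P rotate = P"
    unfolding P rotate_def using f_meas assms(2) by (intro distr_PiM_coordinatewise) auto
  have rotate_meas: "rotate \<in> measurable P P"
    unfolding P rotate_def using f_meas by (rule measurable_PiM_coordinatewise)
  have "real m * a \<noteq> 0"
    using assms(1) by (metis less_irrefl)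
  then have "titan_view m a E A (move_mass x v u d) (rotate r) = titan_view m a E A x r" for r
    using assms(2-5) by (intro titan_view_move_mass_rotate_edge) (auto simp: rotate_def f_def)
  then have "distr P (view_space m E A) (titan_view m a E A x)
      = distr P (view_space m E A) (titan_view m a E A (move_mass x v u d) \<circ> rotate)"
    by (intro distr_cong) auto
  also have "\<dots> = distr (distr P P rotate) (view_space m E A) (titan_view m a E A (move_mass x v u d))"
    unfolding P_def by (intro distr_distr[symmetric] measurable_titan_view rotate_meas[unfolded P_def])
  also have "\<dots> = distr P (view_space m E A) (titan_view m a E A (move_mass x v u d))"
    by (simp only: rotate_distr)
  finally show ?thesis
    unfolding P_def ..
qed

lemma distr_titan_view_move_mass_honest:
  assumes "real m * a > 0" "finite E" "und_connected_on H E" "H \<inter> A = {}" "u \<in> H" "w \<in> H"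
  shows "distr (titan_rand_space m a E) (view_space m E A) (titan_view m a E A (move_mass x u w d))
       = distr (titan_rand_space m a E) (view_space m E A) (titan_view m a E A x)"
proof (rule move_mass_invariant_rtrancl)
  show "(u, w) \<in> {(u, w). u \<in> H \<and> w \<in> H \<and> ((u, w) \<in> E \<or> (w, u) \<in> E)}\<^sup>*"
    using assms(3,5,6) unfolding und_connected_on_def by blast
next
  fix x u v d assume "(u, v) \<in> {(u, w). u \<in> H \<and> w \<in> H \<and> ((u, w) \<in> E \<or> (w, u) \<in> E)}"
  then have "u \<notin> A" "v \<notin> A" "(u, v) \<in> E \<or> (v, u) \<in> E"
    using assms(4) by auto
  then show "distr (titan_rand_space m a E) (view_space m E A) (titan_view m a E A (move_mass x u v d))
       = distr (titan_rand_space m a E) (view_space m E A) (titan_view m a E A x)"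
    using distr_titan_view_move_mass_edge[OF assms(1,2)] by (metis move_mass_swap)
qed

lemma titan_private_if_move_mass_invariant:
  assumes "A \<subseteq> {1..m}" "A \<noteq> {1..m}"
    and move: "\<And>x u w d. u \<in> {1..m} - A \<Longrightarrow> w \<in> {1..m} - A \<Longrightarrow>
      distr (titan_rand_space m a E) (view_space m E A) (titan_view m a E A (move_mass x u w d))
      = distr (titan_rand_space m a E) (view_space m E A) (titan_view m a E A x)"
  shows "titan_private m a E A"
  unfolding titan_private_def
proof (intro allI impI, elim conjE)
  fix x x' :: "nat \<Rightarrow> real"
  assume agree: "\<forall>i\<in>A. x i = x' i" and sums: "(\<Sum>i = 1..m. x i) = (\<Sum>i = 1..m. x' i)"
  define F where "F x = distr (titan_rand_space m a E) (view_space m E A) (titan_view m a E A x)" for x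
  define y where "y i = (if i \<in> {1..m} - A then x' i else x i)" for i
  have "sum x A = sum x' A"
    using agree by (intro sum.cong) auto
  then have sum_x: "sum x ({1..m} - A) = sum x' ({1..m} - A)"
    using sums sum.subset_diff[OF assms(1) finite_atLeastAtMost, of x]
      sum.subset_diff[OF assms(1) finite_atLeastAtMost, of x'] by simp
  have sum_y: "sum y ({1..m} - A) = sum x' ({1..m} - A)"
    by (intro sum.cong) (auto simp: y_def)
  have "F x = F y"
  proof (rule move_mass_invariant_eq[of "{1..m} - A"])
    show "{1..m} - A \<noteq> {}"
      using assms(1,2) by blast
    show "F (move_mass z u w d) = F z" if "u \<in> {1..m} - A" "w \<in> {1..m} - A" for z u w d
      using move[OF that] by (simp add: F_def)
    show "x i = y i" if "i \<notin> {1..m} - A" for i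
      by (simp only: y_def if_not_P[OF that])
    show "sum x ({1..m} - A) = sum y ({1..m} - A)"
      using sum_x sum_y by simp
  qed simp
  also have "F y = F x'"
    unfolding F_def using assms(1) agree
    by (intro arg_cong[where f = "distr _ _"] titan_view_cong) (auto simp: y_def)
  finally show "F x = F x'" unfolding F_def .
qed

theorem theorem3:
  fixes m \<tau> :: nat and a :: real and E :: "(nat \<times> nat) set"
  assumes "a > 0"
    and "E \<subseteq> {1..m} \<times> {1..m}"
    and "weak_vertex_connectivity {1..m} E \<ge> \<tau> + 1"
  shows "\<forall>A. A \<subseteq> {1..m} \<and> card A \<le> \<tau> \<longrightarrow> titan_private m a E A"
proof (intro allI impI, elim conjE)
  fix A assume A: "A \<subseteq> {1..m}" "card A \<le> \<tau>"
  have "card A < weak_vertex_connectivity {1..m} E"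
    using A(2) assms(3) by simp
  then have honest: "und_connected_on ({1..m} - A) E" "2 \<le> card ({1..m} - A)"
    using und_connected_on_diff_if_card_less[OF _ A(1)] by auto
  then have "A \<noteq> {1..m}" "m > 0"
    by (auto intro: Nat.gr0I)
  then have pos: "real m * a > 0"
    using assms(1) by simp
  have "finite E"
    using assms(2) by (rule finite_subset) simp
  show "titan_private m a E A"
  proof (rule titan_private_if_move_mass_invariant[OF A(1) \<open>A \<noteq> {1..m}\<close>])
    fix x u w d assume "u \<in> {1..m} - A" "w \<in> {1..m} - A"
    with pos \<open>finite E\<close> honest(1) show
      "distr (titan_rand_space m a E) (view_space m E A) (titan_view m a E A (move_mass x u w d))
      = distr (titan_rand_space m a E) (view_space m E A) (titan_view m a E A x)"
      by (intro distr_titan_view_move_mass_honest[of m a E "{1..m} - A"]) auto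
  qed
qed

end
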